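(* Let $G$ be a claw-free graph (i.e., $G$ contains no induced subgraph isomorphic to $K_{1,3}$). Then $\alpha_{\mathrm{od}}(G)=\alpha(G^2)$ and $\chi_{\mathrm{so}}(G)=\chi(G^2)$.
   Context: All graphs are finite, simple and undirected. For a vertex $v$, $N(v)$ is its open neighborhood. An odd independent set in a graph $G=(V,E)$ is an independent set $S\subseteq V$ such that for every $v\in V\setminus S$, either $N(v)\cap S=\varnothing$ or $|N(v)\cap S|$ is odd. $\alpha_{\mathrm{od}}(G)$ denotes the maximum size of an odd independent set of $G$. A strong odd coloring of $G$ is a proper vertex coloring such that for every vertex $v$, each color used on $N(v)$ appears an odd number of times in $N(v)$; $\chi_{\mathrm{so}}(G)$ is the minimum number of colors in a strong odd coloring. $G^2$ is the square of $G$: same vertex set, two distinct vertices adjacent iff their distance in $G$ is at most $2$. $\alpha$ and $\chi$ denote independence number and chromatic number. *)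

theory Defs
  imports Main
begin

definition graph :: "'a set \<Rightarrow> ('a \<Rightarrow> 'a \<Rightarrow> bool) \<Rightarrow> bool" where
  "graph V E \<longleftrightarrow> finite V \<and> (\<forall>x y. E x y \<longrightarrow> x \<in> V \<and> y \<in> V)
     \<and> (\<forall>x y. E x y \<longrightarrow> E y x) \<and> (\<forall>x. \<not> E x x)"

definition nbr :: "'a set \<Rightarrow> ('a \<Rightarrow> 'a \<Rightarrow> bool) \<Rightarrow> 'a \<Rightarrow> 'a set" where
  "nbr V E v = {u \<in> V. E v u}"

definition claw_free :: "'a set \<Rightarrow> ('a \<Rightarrow> 'a \<Rightarrow> bool) \<Rightarrow> bool" where
  "claw_free V E \<longleftrightarrow> \<not> (\<exists>a\<in>V. \<exists>b\<in>V. \<exists>c\<in>V. \<exists>d\<in>V.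
     E a b \<and> E a c \<and> E a d \<and> b \<noteq> c \<and> b \<noteq> d \<and> c \<noteq> d
     \<and> \<not> E b c \<and> \<not> E b d \<and> \<not> E c d)"

definition square :: "'a set \<Rightarrow> ('a \<Rightarrow> 'a \<Rightarrow> bool) \<Rightarrow> 'a \<Rightarrow> 'a \<Rightarrow> bool" where
  "square V E x y \<longleftrightarrow> x \<in> V \<and> y \<in> V \<and> x \<noteq> y \<and> (E x y \<or> (\<exists>z\<in>V. E x z \<and> E z y))"

definition independent :: "'a set \<Rightarrow> ('a \<Rightarrow> 'a \<Rightarrow> bool) \<Rightarrow> 'a set \<Rightarrow> bool" where
  "independent V E S \<longleftrightarrow> S \<subseteq> V \<and> (\<forall>x\<in>S. \<forall>y\<in>S. \<not> E x y)"

definition odd_independent :: "'a set \<Rightarrow> ('a \<Rightarrow> 'a \<Rightarrow> bool) \<Rightarrow> 'a set \<Rightarrow> bool" where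
  "odd_independent V E S \<longleftrightarrow> independent V E S \<and>
     (\<forall>v \<in> V - S. nbr V E v \<inter> S = {} \<or> odd (card (nbr V E v \<inter> S)))"

definition alpha :: "'a set \<Rightarrow> ('a \<Rightarrow> 'a \<Rightarrow> bool) \<Rightarrow> nat" where
  "alpha V E = Max {card S | S. independent V E S}"

definition alpha_od :: "'a set \<Rightarrow> ('a \<Rightarrow> 'a \<Rightarrow> bool) \<Rightarrow> nat" where
  "alpha_od V E = Max {card S | S. odd_independent V E S}"

definition proper_coloring :: "'a set \<Rightarrow> ('a \<Rightarrow> 'a \<Rightarrow> bool) \<Rightarrow> ('a \<Rightarrow> nat) \<Rightarrow> bool" where
  "proper_coloring V E c \<longleftrightarrow> (\<forall>x\<in>V. \<forall>y\<in>V. E x y \<longrightarrow> c x \<noteq> c y)"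

definition strong_odd_coloring :: "'a set \<Rightarrow> ('a \<Rightarrow> 'a \<Rightarrow> bool) \<Rightarrow> ('a \<Rightarrow> nat) \<Rightarrow> bool" where
  "strong_odd_coloring V E c \<longleftrightarrow> proper_coloring V E c \<and>
     (\<forall>v\<in>V. \<forall>i \<in> c ` nbr V E v. odd (card {u \<in> nbr V E v. c u = i}))"

definition chi :: "'a set \<Rightarrow> ('a \<Rightarrow> 'a \<Rightarrow> bool) \<Rightarrow> nat" where
  "chi V E = Min {card (c ` V) | c. proper_coloring V E c}"

definition chi_so :: "'a set \<Rightarrow> ('a \<Rightarrow> 'a \<Rightarrow> bool) \<Rightarrow> nat" where
  "chi_so V E = Min {card (c ` V) | c. strong_odd_coloring V E c}"

end

theory Submission
  imports Defs
begin

text \<open>A set is independent in the square of G exactly when it is independent in G and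
  no vertex has two neighbours in it. In a claw-free graph a vertex has at most two
  neighbours in an independent set, and the parity condition rules out two; so the odd
  independent sets of G are the independent sets of its square. Colour classes turn this
  into the statement about colourings: a strong odd colouring is a colouring whose classes
  are odd independent sets, a proper colouring of the square one whose classes are
  independent in the square.\<close>

lemma square_iff_common_nbr:
  assumes "graph V E"
  shows "square V E x y \<longleftrightarrow>
    x \<in> V \<and> y \<in> V \<and> x \<noteq> y \<and> (E x y \<or> (\<exists>v\<in>V. x \<in> nbr V E v \<and> y \<in> nbr V E v))"
proof -
  have "E x v \<longleftrightarrow> E v x" for v
    using assms by (auto simp: graph_def)
  then show ?thesis
    by (auto simp: square_def nbr_def)
qed

lemma independent_square_iff:
  assumes "graph V E"
  shows "independent V (square V E) S \<longleftrightarrow>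
    independent V E S \<and> (\<forall>v\<in>V. card (nbr V E v \<inter> S) \<le> 1)"
proof -
  have irrefl: "E x y \<Longrightarrow> x \<noteq> y" for x y
    using assms by (auto simp: graph_def)
  have card_le_1: "card (nbr V E v \<inter> S) \<le> 1 \<longleftrightarrow>
      (\<forall>x\<in>nbr V E v \<inter> S. \<forall>y\<in>nbr V E v \<inter> S. x = y)" for v
    using assms unfolding One_nat_def
    by (intro card_le_Suc0_iff_eq) (simp add: graph_def nbr_def)
  show ?thesis
  proof
    assume "independent V (square V E) S"
    then have "S \<subseteq> V" "\<And>x y. x \<in> S \<Longrightarrow> y \<in> S \<Longrightarrow> \<not> square V E x y"
      by (auto simp: independent_def)
    then show "independent V E S \<and> (\<forall>v\<in>V. card (nbr V E v \<inter> S) \<le> 1)"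
      unfolding independent_def card_le_1 square_iff_common_nbr[OF assms]
      by (metis IntE irrefl subsetD)
  next
    assume "independent V E S \<and> (\<forall>v\<in>V. card (nbr V E v \<inter> S) \<le> 1)"
    then show "independent V (square V E) S"
      unfolding independent_def card_le_1 square_iff_common_nbr[OF assms] by blast
  qed
qed

lemma claw_free_card_nbr_inter_independent_le_2:
  assumes "claw_free V E" "independent V E S" "v \<in> V"
  shows "card (nbr V E v \<inter> S) \<le> 2"
proof (rule ccontr)
  assume "\<not> ?thesis"
  then have "3 \<le> card (nbr V E v \<inter> S)"
    by simp
  then obtain T where "T \<subseteq> nbr V E v \<inter> S" "card T = 3"
    by (rule obtain_subset_with_card_n)
  then obtain x y z where xyz: "x \<in> nbr V E v \<inter> S" "y \<in> nbr V E v \<inter> S" "z \<in> nbr V E v \<inter> S"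
      and distinct: "x \<noteq> y" "x \<noteq> z" "y \<noteq> z"
    by (auto simp: card_3_iff)
  have "\<not> E x y" "\<not> E x z" "\<not> E y z"
    using assms(2) xyz by (auto simp: independent_def)
  moreover have "x \<in> V" "y \<in> V" "z \<in> V" "E v x" "E v y" "E v z"
    using xyz by (auto simp: nbr_def)
  ultimately show False
    using assms(1,3) distinct unfolding claw_free_def by blast
qed

lemma odd_independent_iff:
  "odd_independent V E S \<longleftrightarrow>
    independent V E S \<and> (\<forall>v\<in>V. nbr V E v \<inter> S = {} \<or> odd (card (nbr V E v \<inter> S)))"
  unfolding odd_independent_def independent_def nbr_def by blast

lemma odd_independent_iff_independent_square:
  assumes "graph V E" "claw_free V E"
  shows "odd_independent V E S \<longleftrightarrow> independent V (square V E) S"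
proof -
  have "nbr V E v \<inter> S = {} \<or> odd (card (nbr V E v \<inter> S)) \<longleftrightarrow> card (nbr V E v \<inter> S) \<le> 1"
    if "independent V E S" "v \<in> V" for v
  proof -
    have "finite (nbr V E v \<inter> S)"
      using assms(1) by (simp add: graph_def nbr_def)
    moreover have "card (nbr V E v \<inter> S) \<le> 2"
      using claw_free_card_nbr_inter_independent_le_2 assms(2) that .
    ultimately show ?thesis
      by (auto simp: le_Suc_eq numeral_2_eq_2)
  qed
  then show ?thesis
    unfolding odd_independent_iff independent_square_iff[OF assms(1)] by blast
qed

lemma proper_coloring_iff_independent_classes:
  "proper_coloring V F c \<longleftrightarrow> (\<forall>i. independent V F {v \<in> V. c v = i})"
  unfolding proper_coloring_def independent_def by (auto simp: eq_commute)

lemma strong_odd_coloring_iff_odd_independent_classes: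
  "strong_odd_coloring V E c \<longleftrightarrow> (\<forall>i. odd_independent V E {v \<in> V. c v = i})"
proof -
  have classes: "{u \<in> nbr V E v. c u = i} = nbr V E v \<inter> {u \<in> V. c u = i}" for v i
    by (auto simp: nbr_def)
  have "(\<forall>i \<in> c ` nbr V E v. odd (card {u \<in> nbr V E v. c u = i})) \<longleftrightarrow>
      (\<forall>i. {u \<in> nbr V E v. c u = i} = {} \<or> odd (card {u \<in> nbr V E v. c u = i}))" for v
    by blast
  then show ?thesis
    unfolding strong_odd_coloring_def odd_independent_iff proper_coloring_iff_independent_classes
      classes by blast
qed

theorem theorem1:
  fixes V :: "'a set" and E :: "'a \<Rightarrow> 'a \<Rightarrow> bool"
  assumes "graph V E" and "claw_free V E"
  shows "alpha_od V E = alpha V (square V E) \<and> chi_so V E = chi V (square V E)"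
proof
  note odd_independent = odd_independent_iff_independent_square[OF assms]
  show "alpha_od V E = alpha V (square V E)"
    unfolding alpha_od_def alpha_def odd_independent ..
  have "strong_odd_coloring V E c \<longleftrightarrow> proper_coloring V (square V E) c" for c
    unfolding strong_odd_coloring_iff_odd_independent_classes
      proper_coloring_iff_independent_classes odd_independent ..
  then show "chi_so V E = chi V (square V E)"
    unfolding chi_so_def chi_def by presburger
qed

end
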